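(* Let $\Omega$ be either a Segre variety $\mathcal{S}_{\ell,k}(\mathbb{K})$ with $\ell\le3$, $k\ge1$, or one of the line Grassmannians $\mathcal{G}_{5,2}(\mathbb{K})$, $\mathcal{G}_{6,2}(\mathbb{K})$, viewed in the projective space it spans. Then the only subspace of $\langle\Omega\rangle$ which is legal with respect to $\Omega$ is the empty subspace; i.e. $\Omega$ admits no proper legal projection.
   Context: Let $\Omega$ be a Segre variety $\mathcal{S}_{\ell,k}(\mathbb{K})$ (image of the Segre map, i.e. the rank-one $(\ell+1)\times(k+1)$ matrices up to scalars) or a line Grassmannian $\mathcal{G}_{n+1,2}(\mathbb{K})$ (Plücker image of the lines of $\mathbb{P}^n(\mathbb{K})$), with point set $X$; two points are collinear if the line joining them lies in $X$. Let $\Xi$ be the set of subspaces spanned by the convex closures (in $X$) of pairs of non-collinear points at distance 2 (these are grids, resp. Klein quadrics). A subspace $S$ of $\langle X\rangle$ is legal with respect to $\Omega$ if $S$ is disjoint from $\langle\xi_1,\xi_2\rangle$ for all $\xi_1,\xi_2\in\Xi$; a legal projection is a projection from a legal subspace onto a complementary subspace, and it is proper if the subspace is non-empty. *)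

theory Defs
  imports "HOL-Analysis.Analysis"
begin

(* Projective space PG(V) over a field 'a, V = 'a^'i (finite-dimensional).
   A point set X of PG(V) is represented by its cone: the set of nonzero
   vectors representing its points (closed under nonzero scalars).
   Projective subspaces are represented by linear subspaces of V
   (the empty projective subspace is the zero subspace {0}). *)

definition pcollinear :: "('a::field^'i) set \<Rightarrow> 'a^'i \<Rightarrow> 'a^'i \<Rightarrow> bool" where
  "pcollinear X p q \<longleftrightarrow> p \<noteq> 0 \<and> q \<noteq> 0 \<and> vec.span {p, q} - {0} \<subseteq> X"

definition pwalk :: "('a::field^'i) set \<Rightarrow> 'a^'i \<Rightarrow> 'a^'i \<Rightarrow> nat \<Rightarrow> bool" where
  "pwalk X p q n \<longleftrightarrow>
     (\<exists>f. f 0 = p \<and> f n = q \<and> (\<forall>i<n. pcollinear X (f i) (f (Suc i))))"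

definition psubspace_closed :: "('a::field^'i) set \<Rightarrow> ('a^'i) set \<Rightarrow> bool" where
  "psubspace_closed X C \<longleftrightarrow>
     (\<forall>a\<in>C. \<forall>b\<in>C. pcollinear X a b \<longrightarrow> vec.span {a, b} - {0} \<subseteq> C)"

definition geod_closed :: "('a::field^'i) set \<Rightarrow> ('a^'i) set \<Rightarrow> bool" where
  "geod_closed X C \<longleftrightarrow>
     (\<forall>a\<in>C. \<forall>b\<in>C. \<forall>n f. f 0 = a \<and> f n = b \<and> (\<forall>i<n. pcollinear X (f i) (f (Suc i)))
        \<and> (\<forall>m<n. \<not> pwalk X a b m) \<longrightarrow> (\<forall>i\<le>n. f i \<in> C))"

definition pconvex :: "('a::field^'i) set \<Rightarrow> ('a^'i) set \<Rightarrow> bool" where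
  "pconvex X C \<longleftrightarrow> C \<subseteq> X \<and> psubspace_closed X C \<and> geod_closed X C"

definition convex_closure2 :: "('a::field^'i) set \<Rightarrow> 'a^'i \<Rightarrow> 'a^'i \<Rightarrow> ('a^'i) set" where
  "convex_closure2 X p q = \<Inter> {C. pconvex X C \<and> p \<in> C \<and> q \<in> C}"

definition Xi :: "('a::field^'i) set \<Rightarrow> ('a^'i) set set" where
  "Xi X = {vec.span (convex_closure2 X p q) | p q.
             p \<in> X \<and> q \<in> X \<and> \<not> pcollinear X p q \<and> pwalk X p q 2}"

definition legal :: "('a::field^'i) set \<Rightarrow> ('a^'i) set \<Rightarrow> bool" where
  "legal X W \<longleftrightarrow> vec.subspace W \<and> W \<subseteq> vec.span X \<and>
     (\<forall>\<xi>1\<in>Xi X. \<forall>\<xi>2\<in>Xi X. W \<inter> vec.span (\<xi>1 \<union> \<xi>2) = {0})"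

text \<open>Segre variety S_{l,k}: rank one (l+1)x(k+1) matrices, with CARD('l) = l+1,
  CARD('k) = k+1; matrices are vectors indexed by 'l \<times> 'k.\<close>
definition segre_pts :: "('a::field^('l::finite \<times> 'k::finite)) set" where
  "segre_pts = {(\<chi> ij. u $ fst ij * v $ snd ij) | (u :: 'a^'l) (v :: 'a^'k). u \<noteq> 0 \<and> v \<noteq> 0}"

text \<open>Line Grassmannian G_{n+1,2}: Pluecker images u \<wedge> v (as alternating
  matrices indexed by 'n \<times> 'n) of lines spanned by independent u, v in 'a^'n,
  CARD('n) = n+1.\<close>
definition grass_pts :: "('a::field^('n::finite \<times> 'n)) set" where
  "grass_pts = {(\<chi> ij. u $ fst ij * v $ snd ij - u $ snd ij * v $ fst ij) | (u :: 'a^'n) v.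
                 u \<noteq> v \<and> vec.independent {u, v}}"

end

theory Submission
  imports Defs
begin

text \<open>A legal subspace meets no span of two members of \<open>Xi\<close>, so it is trivial as soon as every
  vector of the ambient span is a sum \<open>g\<^sub>1 + g\<^sub>2\<close> with each \<open>g\<^sub>i\<close> in some member of \<open>Xi\<close>.
  For the Segre variety with at most four rows, split a matrix into two blocks of at most two
  rows; a two-row block lies in the span of a grid, built from two independent vectors spanning
  its rows. For the line Grassmannian of a space of dimension five or six, split an alternating
  matrix into its entries in the rows and columns of two coordinates \<open>a, b\<close>, which lie in the
  span of the Klein quadric of a solid \<open>\<langle>e\<^sub>a, e\<^sub>b, x, y\<rangle>\<close>, and a matrix supported on the at most
  four remaining coordinates, which lies in the span of the Klein quadric of their solid.\<close>

section \<open>Convex closures and legal subspaces\<close>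

lemma pcollinear_imp_pcollinear_self:
  assumes "pcollinear X p q"
  shows "pcollinear X p p" "pcollinear X q q"
  using assms vec.span_mono[of "{p}" "{p, q}"] vec.span_mono[of "{q}" "{p, q}"]
  unfolding pcollinear_def by auto

lemma pcollinear_imp_mem:
  assumes "pcollinear X p q"
  shows "p \<in> X" "q \<in> X"
  using assms vec.span_base[of p "{p, q}"] vec.span_base[of q "{p, q}"]
  unfolding pcollinear_def by auto

lemma span_pair_eq: "vec.span {p, q} = {a *s p + b *s q | a b. True}"
  by (auto simp: vec.span_breakdown_eq vec.span_singleton diff_eq_eq image_iff add.commute) blast

lemma pcollinearI:
  assumes "p \<noteq> 0" "q \<noteq> 0" "\<And>a b. a *s p + b *s q \<noteq> 0 \<Longrightarrow> a *s p + b *s q \<in> X"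
  shows "pcollinear X p q"
  using assms unfolding pcollinear_def span_pair_eq by auto

lemma not_pcollinear_if_sum_notin:
  assumes "p + q \<noteq> 0" "p + q \<notin> X"
  shows "\<not> pcollinear X p q"
  using assms vec.span_add[OF vec.span_base vec.span_base, of p "{p, q}" q]
  unfolding pcollinear_def by auto

lemma midpoint_in_convex_closure2:
  assumes pr: "pcollinear X p r" and rq: "pcollinear X r q" and pq: "\<not> pcollinear X p q"
  shows "r \<in> convex_closure2 X p q"
  unfolding convex_closure2_def
proof (intro InterI, clarify)
  fix C assume C: "pconvex X C" "p \<in> C" "q \<in> C"
  define f where "f = (\<lambda>i::nat. if i = 0 then p else if i = 1 then r else q)"
  have "p \<noteq> q"
    using pq pcollinear_imp_pcollinear_self(1)[OF pr] by auto
  then have "\<forall>m<2. \<not> pwalk X p q m"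
    using pq by (auto simp: pwalk_def less_2_cases_iff)
  moreover have "\<forall>i<2. pcollinear X (f i) (f (Suc i))"
    using pr rq by (auto simp: f_def less_2_cases_iff)
  ultimately have geodesic: "f 0 = p \<and> f 2 = q \<and> (\<forall>i<2. pcollinear X (f i) (f (Suc i)))
      \<and> (\<forall>m<2. \<not> pwalk X p q m)"
    by (simp add: f_def)
  have "geod_closed X C"
    using C(1) by (simp add: pconvex_def)
  from this[unfolded geod_closed_def, rule_format, OF C(2,3) geodesic, of 1]
  show "r \<in> C"
    by (simp add: f_def)
qed

lemma span_convex_closure2_in_Xi:
  assumes pr: "pcollinear X p r" and rq: "pcollinear X r q" and pq: "\<not> pcollinear X p q"
  shows "vec.span (convex_closure2 X p q) \<in> Xi X"
proof -
  have "pwalk X p q 2"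
    unfolding pwalk_def using pr rq
    by (intro exI[of _ "\<lambda>i::nat. if i = 0 then p else if i = 1 then r else q"])
      (auto simp: less_2_cases_iff)
  then show ?thesis
    using pcollinear_imp_mem[OF pr] pcollinear_imp_mem[OF rq] pq unfolding Xi_def by blast
qed

lemma Xi_contains_span_of_midpoints:
  assumes "\<not> pcollinear X p q" "r \<in> R" and R: "\<forall>r\<in>R. pcollinear X p r \<and> pcollinear X r q"
  shows "\<exists>\<xi>\<in>Xi X. vec.span (insert p (insert q R)) \<subseteq> \<xi>"
proof
  show "vec.span (convex_closure2 X p q) \<in> Xi X"
    using assms by (meson span_convex_closure2_in_Xi)
  have "p \<in> convex_closure2 X p q" "q \<in> convex_closure2 X p q"
    unfolding convex_closure2_def by auto
  then have "insert p (insert q R) \<subseteq> convex_closure2 X p q"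
    using assms(1) R midpoint_in_convex_closure2 by blast
  then show "vec.span (insert p (insert q R)) \<subseteq> vec.span (convex_closure2 X p q)"
    by (rule vec.span_mono)
qed

lemma legal_iff_trivial_if_sums_from_Xi:
  assumes "\<And>w. w \<in> vec.span X \<Longrightarrow> \<exists>\<xi>1\<in>Xi X. \<exists>\<xi>2\<in>Xi X. \<exists>g1\<in>\<xi>1. \<exists>g2\<in>\<xi>2. w = g1 + g2"
  shows "legal X W \<longleftrightarrow> W = {0}"
proof
  assume legal: "legal X W"
  have "w = 0" if "w \<in> W" for w
  proof -
    have "w \<in> vec.span X"
      using legal that by (auto simp: legal_def)
    then obtain \<xi>1 \<xi>2 g1 g2 where
      "\<xi>1 \<in> Xi X" "\<xi>2 \<in> Xi X" "g1 \<in> \<xi>1" "g2 \<in> \<xi>2" "w = g1 + g2"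
      using assms by meson
    moreover from this have "w \<in> vec.span (\<xi>1 \<union> \<xi>2)"
      by (auto intro: vec.span_add vec.span_base)
    ultimately show "w = 0"
      using legal that unfolding legal_def by blast
  qed
  moreover have "0 \<in> W"
    using legal by (simp add: legal_def vec.subspace_0)
  ultimately show "W = {0}" by blast
qed (auto simp: legal_def vec.subspace_def vec.span_zero)

section \<open>Coordinates and \<open>2 \<times> 2\<close> minors\<close>

lemma axis_index [simp]: "axis i x $ j = (if j = i then x else 0)"
  by (simp add: axis_def)

lemma two_distinct_elements:
  assumes "2 \<le> card S"
  obtains i j where "i \<in> S" "j \<in> S" "i \<noteq> j"
  using assms by (metis card_2_iff insert_subset obtain_subset_with_card_n)

lemma pair_superset_of_card_le_2:
  assumes "finite C" "card C \<le> 2" "i \<noteq> j"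
  obtains i' j' where "i' \<noteq> j'" "C \<subseteq> {i', j'}" "{i', j'} \<subseteq> C \<union> {i, j}"
proof -
  consider "C = {}" | x where "C = {x}" | x y where "C = {x, y}" "x \<noteq> y"
  proof -
    have "card C = 0 \<or> card C = 1 \<or> card C = 2"
      using assms(2) by linarith
    then show ?thesis
      using assms(1) that by (auto simp: card_1_singleton_iff card_2_iff)
  qed
  then show thesis
  proof cases
    case 1
    then show thesis using assms(3) that[of i j] by auto
  next
    case (2 x)
    then show thesis using that[of i x] that[of j x] assms(3) by (cases "x = i") auto
  next
    case (3 x y)
    then show thesis using that[of x y] by auto
  qed
qed

definition minor :: "'a::field^'n \<Rightarrow> 'a^'n \<Rightarrow> 'n \<Rightarrow> 'n \<Rightarrow> 'a" where
  "minor x y s t = x$s * y$t - x$t * y$s"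

lemma nonzero_if_minor_nonzero: "minor x y s t \<noteq> 0 \<Longrightarrow> x \<noteq> 0 \<and> y \<noteq> 0"
  by (auto simp: minor_def)

lemma scaled_if_minors_vanish:
  assumes "a$s \<noteq> 0" "\<And>t. minor a b s t = 0"
  shows "b = (b$s / a$s) *s a"
  using assms by (auto simp: vec_eq_iff minor_def field_simps)

lemma extend_to_independent_pair:
  fixes z :: "'a::field^'n"
  assumes "z \<noteq> 0" "\<forall>m. m \<notin> S \<longrightarrow> z$m = 0" "i \<in> S" "j \<in> S" "i \<noteq> j"
  obtains y s t where "\<forall>m. m \<notin> S \<longrightarrow> y$m = 0" "minor z y s t \<noteq> 0"
proof -
  obtain s where s: "z$s \<noteq> 0"
    using assms(1) by (metis vec_eq_iff zero_index)
  moreover obtain t where "t \<in> S" "t \<noteq> s"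
    using assms(3-5) by blast
  ultimately show thesis
    using assms(2) by (intro that[of "axis t 1" s t]) (auto simp: minor_def)
qed

lemma independent_pair_spanning:
  fixes a b :: "'a::field^'n"
  assumes "i \<in> S" "j \<in> S" "i \<noteq> j"
    and supp_a: "\<forall>m. m \<notin> S \<longrightarrow> a$m = 0" and supp_b: "\<forall>m. m \<notin> S \<longrightarrow> b$m = 0"
  obtains x y s t c1 d1 c2 d2 where
    "\<forall>m. m \<notin> S \<longrightarrow> x$m = 0" "\<forall>m. m \<notin> S \<longrightarrow> y$m = 0" "minor x y s t \<noteq> 0"
    "a = c1 *s x + d1 *s y" "b = c2 *s x + d2 *s y"
proof (cases "\<exists>s t. minor a b s t \<noteq> 0")
  case True
  then obtain s t where "minor a b s t \<noteq> 0"
    by blast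
  then show thesis
    using supp_a supp_b by (intro that[of a b s t 1 0 0 1]) auto
next
  case False
  have "\<exists>z c d. z \<noteq> 0 \<and> (\<forall>m. m \<notin> S \<longrightarrow> z$m = 0) \<and> a = c *s z \<and> b = d *s z"
  proof (cases "a = 0")
    case False
    then obtain s where "a$s \<noteq> 0"
      by (metis vec_eq_iff zero_index)
    then have "b = (b$s / a$s) *s a"
      using \<open>\<nexists>s t. minor a b s t \<noteq> 0\<close> by (intro scaled_if_minors_vanish) auto
    then show ?thesis
      using False supp_a by (intro exI[of _ a] exI[of _ 1] exI[of _ "b$s / a$s"]) auto
  next
    case a0: True
    show ?thesis
    proof (cases "b = 0")
      case False
      then show ?thesis
        using a0 supp_b by (intro exI[of _ b] exI[of _ 0] exI[of _ 1]) auto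
    next
      case True
      then show ?thesis
        using a0 \<open>i \<in> S\<close> by (intro exI[of _ "axis i 1"] exI[of _ 0]) (auto simp: vec_eq_iff)
    qed
  qed
  then obtain z c d where z: "z \<noteq> 0" "\<forall>m. m \<notin> S \<longrightarrow> z$m = 0" "a = c *s z" "b = d *s z"
    by blast
  obtain y s t where "\<forall>m. m \<notin> S \<longrightarrow> y$m = 0" "minor z y s t \<noteq> 0"
    using extend_to_independent_pair[OF z(1,2) assms(1-3)] .
  then show thesis
    using z by (intro that[of z y s t c 0 d 0]) auto
qed

section \<open>Segre varieties\<close>

definition segre_map :: "'a::field^'l \<Rightarrow> 'a^'k \<Rightarrow> 'a^('l \<times> 'k)" where
  "segre_map u v = (\<chi> ij. u$fst ij * v$snd ij)"

lemma segre_map_index [simp]: "segre_map u v $ (i, j) = u$i * v$j"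
  by (simp add: segre_map_def)

lemma segre_map_eq_0_iff: "segre_map u v = 0 \<longleftrightarrow> u = 0 \<or> v = 0"
  by (auto simp: vec_eq_iff)

lemma segre_map_in_segre_pts: "u \<noteq> 0 \<Longrightarrow> v \<noteq> 0 \<Longrightarrow> segre_map u v \<in> segre_pts"
  unfolding segre_pts_def segre_map_def by blast

lemma segre_pts_minor_eq_0:
  "z \<in> segre_pts \<Longrightarrow> z$(i1, s) * z$(i2, t) - z$(i1, t) * z$(i2, s) = 0"
  unfolding segre_pts_def by (auto simp: algebra_simps)

lemma pcollinear_segre_map_right:
  assumes "u \<noteq> 0" "v1 \<noteq> 0" "v2 \<noteq> 0"
  shows "pcollinear segre_pts (segre_map u v1) (segre_map u v2)"
proof (rule pcollinearI)
  fix a b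
  have "a *s segre_map u v1 + b *s segre_map u v2 = segre_map u (a *s v1 + b *s v2)"
    by (auto simp: vec_eq_iff algebra_simps)
  then show "a *s segre_map u v1 + b *s segre_map u v2 \<noteq> 0 \<Longrightarrow>
      a *s segre_map u v1 + b *s segre_map u v2 \<in> segre_pts"
    by (simp add: segre_map_eq_0_iff segre_map_in_segre_pts)
qed (use assms in \<open>simp_all add: segre_map_eq_0_iff\<close>)

lemma pcollinear_segre_map_left:
  assumes "u1 \<noteq> 0" "u2 \<noteq> 0" "v \<noteq> 0"
  shows "pcollinear segre_pts (segre_map u1 v) (segre_map u2 v)"
proof (rule pcollinearI)
  fix a b
  have "a *s segre_map u1 v + b *s segre_map u2 v = segre_map (a *s u1 + b *s u2) v"
    by (auto simp: vec_eq_iff algebra_simps)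
  then show "a *s segre_map u1 v + b *s segre_map u2 v \<noteq> 0 \<Longrightarrow>
      a *s segre_map u1 v + b *s segre_map u2 v \<in> segre_pts"
    by (simp add: segre_map_eq_0_iff segre_map_in_segre_pts)
qed (use assms in \<open>simp_all add: segre_map_eq_0_iff\<close>)

text \<open>With \<open>x, y\<close> independent and spanning \<open>a, b\<close>, the grid spanned by
  \<open>e\<^sub>i\<^sub>1 \<otimes> x, e\<^sub>i\<^sub>1 \<otimes> y, e\<^sub>i\<^sub>2 \<otimes> x, e\<^sub>i\<^sub>2 \<otimes> y\<close> has the opposite points \<open>e\<^sub>i\<^sub>1 \<otimes> x\<close> and \<open>e\<^sub>i\<^sub>2 \<otimes> y\<close>.\<close>
lemma segre_map_two_rows_in_Xi:
  fixes a b :: "'a::field^'k"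
  assumes "i1 \<noteq> i2" "2 \<le> CARD('k)"
  shows "\<exists>\<xi>\<in>Xi (segre_pts :: ('a^('l \<times> 'k)) set).
           segre_map (axis i1 1 :: 'a^'l) a + segre_map (axis i2 1) b \<in> \<xi>"
proof -
  obtain j1 j2 :: 'k where "j1 \<noteq> j2"
    using two_distinct_elements[of "UNIV :: 'k set"] assms(2) by metis
  then obtain x y s t c1 d1 c2 d2 where xy: "minor x y s t \<noteq> 0"
    "a = c1 *s x + d1 *s y" "b = c2 *s x + d2 *s y"
    by (rule independent_pair_spanning[of j1 UNIV j2 a b, rotated 2]) auto
  have "x \<noteq> 0" "y \<noteq> 0"
    using nonzero_if_minor_nonzero[OF xy(1)] by auto
  define e1 e2 where "e1 = (axis i1 1 :: 'a^'l)" and "e2 = (axis i2 1 :: 'a^'l)"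
  have "e1 \<noteq> 0" "e2 \<noteq> 0"
    by (simp_all add: e1_def e2_def axis_eq_0_iff)
  define p q where "p = segre_map e1 x" and "q = segre_map e2 y"
  have sum_minor: "(p + q) $ (i1, s) * (p + q) $ (i2, t) - (p + q) $ (i1, t) * (p + q) $ (i2, s)
      = minor x y s t"
    using assms(1) by (simp add: p_def q_def e1_def e2_def minor_def)
  then have "p + q \<noteq> 0" "p + q \<notin> segre_pts"
    using xy(1) segre_pts_minor_eq_0[of "p + q" i1 s i2 t]
    by (auto simp del: vector_add_component)
  then have "\<not> pcollinear segre_pts p q"
    by (rule not_pcollinear_if_sum_notin)
  moreover have "\<forall>r\<in>{segre_map e1 y, segre_map e2 x}.
      pcollinear segre_pts p r \<and> pcollinear segre_pts r q"
    unfolding p_def q_def using \<open>x \<noteq> 0\<close> \<open>y \<noteq> 0\<close> \<open>e1 \<noteq> 0\<close> \<open>e2 \<noteq> 0\<close>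
    by (auto intro: pcollinear_segre_map_left pcollinear_segre_map_right)
  ultimately obtain \<xi> where "\<xi> \<in> Xi segre_pts"
      and span: "vec.span {p, q, segre_map e1 y, segre_map e2 x} \<subseteq> \<xi>"
    using Xi_contains_span_of_midpoints[of segre_pts p q "segre_map e1 y"
        "{segre_map e1 y, segre_map e2 x}"] by blast
  have "segre_map e1 a + segre_map e2 b
      = c1 *s p + d2 *s q + d1 *s segre_map e1 y + c2 *s segre_map e2 x"
    unfolding xy p_def q_def by (auto simp: vec_eq_iff algebra_simps)
  also have "\<dots> \<in> \<xi>"
    using span by (rule subsetD) (intro vec.span_add vec.span_scale vec.span_base; simp)
  finally show ?thesis
    using \<open>\<xi> \<in> Xi segre_pts\<close> unfolding e1_def e2_def by blast
qed

lemma segre_two_row_matrix_in_Xi: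
  fixes w :: "'a::field^('l::finite \<times> 'k::finite)"
  assumes "i1 \<noteq> i2" "2 \<le> CARD('k)" and rows: "\<forall>i j. i \<notin> {i1, i2} \<longrightarrow> w $ (i, j) = 0"
  shows "\<exists>\<xi>\<in>Xi segre_pts. w \<in> \<xi>"
proof -
  define row where "row i = (\<chi> j. w $ (i, j))" for i
  have "w = segre_map (axis i1 1) (row i1) + segre_map (axis i2 1) (row i2)"
    using assms(1) rows by (auto simp: vec_eq_iff split_paired_All row_def)
  then show ?thesis
    using segre_map_two_rows_in_Xi[OF assms(1,2), of "row i1" "row i2"] by simp
qed

lemma segre_decomposition:
  fixes w :: "'a::field^('l::finite \<times> 'k::finite)"
  assumes "2 \<le> CARD('l)" "CARD('l) \<le> 4" "2 \<le> CARD('k)"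
  shows "\<exists>\<xi>1\<in>Xi segre_pts. \<exists>\<xi>2\<in>Xi segre_pts. \<exists>g1\<in>\<xi>1. \<exists>g2\<in>\<xi>2. w = g1 + g2"
proof -
  obtain i1 i2 :: 'l where "i1 \<noteq> i2"
    using two_distinct_elements[of "UNIV :: 'l set"] assms(1) by metis
  moreover have "card (UNIV - {i1, i2}) \<le> 2"
    using assms(2) calculation by (simp add: card_Diff_subset)
  ultimately obtain i3 i4 where "i3 \<noteq> i4" "UNIV - {i1, i2} \<subseteq> {i3, i4}"
    by (metis finite pair_superset_of_card_le_2)
  define g where "g = (\<chi> ij. if fst ij \<in> {i1, i2} then w $ ij else 0)"
  obtain \<xi>1 where "\<xi>1 \<in> Xi segre_pts" "g \<in> \<xi>1"
    using segre_two_row_matrix_in_Xi[OF \<open>i1 \<noteq> i2\<close> assms(3), of g] by (auto simp: g_def)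
  moreover have "\<forall>i j. i \<notin> {i3, i4} \<longrightarrow> (w - g) $ (i, j) = 0"
    using \<open>UNIV - {i1, i2} \<subseteq> {i3, i4}\<close> by (auto simp: g_def)
  then obtain \<xi>2 where "\<xi>2 \<in> Xi segre_pts" "w - g \<in> \<xi>2"
    using segre_two_row_matrix_in_Xi[OF \<open>i3 \<noteq> i4\<close> assms(3)] by blast
  moreover have "w = g + (w - g)"
    by simp
  ultimately show ?thesis
    by blast
qed

section \<open>Line Grassmannians\<close>

definition wedge :: "'a::field^'n \<Rightarrow> 'a^'n \<Rightarrow> 'a^('n \<times> 'n)" where
  "wedge u v = (\<chi> ij. u$fst ij * v$snd ij - u$snd ij * v$fst ij)"

lemma wedge_index [simp]: "wedge u v $ (i, j) = u$i * v$j - u$j * v$i"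
  by (simp add: wedge_def)

lemma wedge_in_grass_pts:
  assumes "wedge u v \<noteq> 0"
  shows "wedge u v \<in> grass_pts"
proof -
  have "u \<notin> vec.span {v}"
    using assms by (auto simp: vec.span_singleton vec_eq_iff)
  moreover have "v \<noteq> 0"
    using assms by (auto simp: vec_eq_iff) (metis mult_zero_right)
  ultimately have "vec.independent {u, v}"
    by (intro vec.independent_insertI) (auto simp: vec.span_empty vec.independent_empty)
  moreover have "u \<noteq> v"
    using \<open>u \<notin> vec.span {v}\<close> vec.span_base by blast
  ultimately show ?thesis
    unfolding grass_pts_def wedge_def by blast
qed

lemma pcollinear_wedge_same_left:
  assumes "wedge u v \<noteq> 0" "wedge u v' \<noteq> 0"
  shows "pcollinear grass_pts (wedge u v) (wedge u v')"
proof (rule pcollinearI)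
  fix a b
  have "a *s wedge u v + b *s wedge u v' = wedge u (a *s v + b *s v')"
    by (auto simp: vec_eq_iff algebra_simps)
  then show "a *s wedge u v + b *s wedge u v' \<noteq> 0 \<Longrightarrow> a *s wedge u v + b *s wedge u v' \<in> grass_pts"
    by (simp add: wedge_in_grass_pts)
qed (use assms in auto)

lemma grass_pts_pluecker:
  "z \<in> grass_pts \<Longrightarrow> z$(a, b) * z$(s, t) - z$(a, s) * z$(b, t) + z$(a, t) * z$(b, s) = 0"
  unfolding grass_pts_def by (auto simp: algebra_simps)

lemma wedge_axis_nonzero:
  assumes "x$a = 0" "x \<noteq> 0"
  shows "wedge (axis a 1) x \<noteq> 0"
proof -
  obtain m where "x$m \<noteq> 0"
    using assms(2) by (metis vec_eq_iff zero_index)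
  then have "wedge (axis a 1) x $ (a, m) \<noteq> 0"
    using assms(1) by auto
  then show ?thesis
    by (metis zero_index)
qed

text \<open>In the Klein quadric of the solid \<open>\<langle>e\<^sub>a, e\<^sub>b, x, y\<rangle>\<close> the points \<open>e\<^sub>a \<and> e\<^sub>b\<close> and \<open>x \<and> y\<close> are
  opposite, and \<open>e\<^sub>a \<and> x, e\<^sub>a \<and> y, e\<^sub>b \<and> x, e\<^sub>b \<and> y\<close> are collinear with both; these six points
  span the whole exterior square of the solid.\<close>
lemma grass_klein_quadric_in_Xi:
  fixes x y :: "'a::field^'n"
  assumes "a \<noteq> b" and xy: "x$a = 0" "x$b = 0" "y$a = 0" "y$b = 0" and minor: "minor x y s t \<noteq> 0"
  shows "\<exists>\<xi>\<in>Xi grass_pts. c *s wedge (axis a 1) (axis b 1) + wedge (axis a 1) (c1 *s x + d1 *s y)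
           + wedge (axis b 1) (c2 *s x + d2 *s y) + d *s wedge x y \<in> \<xi>"
proof -
  define ea eb where "ea = (axis a 1 :: 'a^'n)" and "eb = (axis b 1 :: 'a^'n)"
  define p q where "p = wedge ea eb" and "q = wedge x y"
  define r1 r2 r3 r4 where "r1 = wedge ea x" and "r2 = wedge ea y"
    and "r3 = wedge eb x" and "r4 = wedge eb y"
  have "x \<noteq> 0" "y \<noteq> 0"
    using nonzero_if_minor_nonzero[OF minor] by auto
  have "p $ (a, b) \<noteq> 0" "q $ (s, t) \<noteq> 0"
    using assms(1) minor by (simp_all add: p_def q_def ea_def eb_def minor_def)
  then have nonzero: "p \<noteq> 0" "q \<noteq> 0" "r1 \<noteq> 0" "r2 \<noteq> 0" "r3 \<noteq> 0" "r4 \<noteq> 0"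
    unfolding r1_def r2_def r3_def r4_def ea_def eb_def
    using wedge_axis_nonzero xy \<open>x \<noteq> 0\<close> \<open>y \<noteq> 0\<close> by (metis zero_index)+
  have "s \<notin> {a, b}" "t \<notin> {a, b}"
    using minor xy by (auto simp: minor_def)
  then have "(p + q) $ (a, b) * (p + q) $ (s, t) - (p + q) $ (a, s) * (p + q) $ (b, t)
      + (p + q) $ (a, t) * (p + q) $ (b, s) = minor x y s t"
    using assms(1) xy by (auto simp: p_def q_def ea_def eb_def minor_def)
  then have "p + q \<noteq> 0" "p + q \<notin> grass_pts"
    using minor grass_pts_pluecker[of "p + q" a b s t] by (auto simp del: vector_add_component)
  then have not_collinear: "\<not> pcollinear grass_pts p q"
    by (rule not_pcollinear_if_sum_notin)
  have swapped: "p = wedge eb (- ea)" "q = wedge y (- x)" "r1 = wedge x (- ea)"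
    "r2 = wedge y (- ea)" "r3 = wedge x (- eb)" "r4 = wedge y (- eb)"
    unfolding p_def q_def r1_def r2_def r3_def r4_def by (auto simp: vec_eq_iff algebra_simps)
  have "pcollinear grass_pts p r1" "pcollinear grass_pts p r2"
    using nonzero(1,3,4) unfolding p_def r1_def r2_def by (auto intro: pcollinear_wedge_same_left)
  moreover have "pcollinear grass_pts p r3" "pcollinear grass_pts p r4"
    using nonzero(1,5,6) unfolding swapped(1) r3_def r4_def
    by (auto intro: pcollinear_wedge_same_left)
  moreover have "pcollinear grass_pts r1 q" "pcollinear grass_pts r3 q"
    using nonzero(2,3,5) unfolding swapped(3,5) q_def by (auto intro: pcollinear_wedge_same_left)
  moreover have "pcollinear grass_pts r2 q" "pcollinear grass_pts r4 q"
    using nonzero(2,4,6) unfolding swapped(2,4,6) by (auto intro: pcollinear_wedge_same_left)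
  ultimately have "\<forall>r\<in>{r1, r2, r3, r4}. pcollinear grass_pts p r \<and> pcollinear grass_pts r q"
    by blast
  with not_collinear obtain \<xi> where "\<xi> \<in> Xi grass_pts"
      and span: "vec.span {p, q, r1, r2, r3, r4} \<subseteq> \<xi>"
    using Xi_contains_span_of_midpoints[of grass_pts p q r1 "{r1, r2, r3, r4}"] by blast
  have "c *s wedge ea eb + wedge ea (c1 *s x + d1 *s y) + wedge eb (c2 *s x + d2 *s y)
      + d *s wedge x y = c *s p + d *s q + c1 *s r1 + d1 *s r2 + c2 *s r3 + d2 *s r4"
    unfolding p_def q_def r1_def r2_def r3_def r4_def by (auto simp: vec_eq_iff algebra_simps)
  also have "\<dots> \<in> \<xi>"
    using span by (rule subsetD) (intro vec.span_add vec.span_scale vec.span_base; simp)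
  finally show ?thesis
    using \<open>\<xi> \<in> Xi grass_pts\<close> unfolding ea_def eb_def by blast
qed

lemma grass_two_index_part_in_Xi:
  fixes \<alpha> \<beta> :: "'a::field^'n"
  assumes "a \<noteq> b" "i \<notin> {a, b}" "j \<notin> {a, b}" "i \<noteq> j"
    and "\<alpha>$a = 0" "\<alpha>$b = 0" "\<beta>$a = 0" "\<beta>$b = 0"
  shows "\<exists>\<xi>\<in>Xi grass_pts.
           c *s wedge (axis a 1) (axis b 1) + wedge (axis a 1) \<alpha> + wedge (axis b 1) \<beta> \<in> \<xi>"
proof -
  have supp: "\<forall>m. m \<notin> - {a, b} \<longrightarrow> \<alpha>$m = 0" "\<forall>m. m \<notin> - {a, b} \<longrightarrow> \<beta>$m = 0"
    using assms(5-8) by auto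
  obtain x y s t c1 d1 c2 d2 where
    "\<forall>m. m \<notin> - {a, b} \<longrightarrow> x$m = 0" "\<forall>m. m \<notin> - {a, b} \<longrightarrow> y$m = 0" "minor x y s t \<noteq> 0"
    "\<alpha> = c1 *s x + d1 *s y" "\<beta> = c2 *s x + d2 *s y"
    by (rule independent_pair_spanning[OF _ _ \<open>i \<noteq> j\<close> supp]) (use assms(2,3) in auto)
  then show ?thesis
    using grass_klein_quadric_in_Xi[OF \<open>a \<noteq> b\<close>, of x y s t c c1 d1 c2 d2 0] by simp
qed

definition alternating :: "'a::field^('n::finite \<times> 'n) \<Rightarrow> bool" where
  "alternating w \<longleftrightarrow> (\<forall>i. w$(i, i) = 0) \<and> (\<forall>i j. w$(i, j) + w$(j, i) = 0)"

lemma alternating_if_in_span_grass_pts: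
  assumes "w \<in> vec.span (grass_pts :: ('a::field^('n::finite \<times> 'n)) set)"
  shows "alternating w"
proof (rule vec.span_induct[OF assms])
  show "vec.subspace {w :: 'a^('n \<times> 'n). alternating w}"
  proof (rule vec.subspaceI)
    fix x y :: "'a^('n \<times> 'n)" and c :: 'a
    assume "x \<in> {w. alternating w}" "y \<in> {w. alternating w}"
    then have x: "x$(i, i) = 0" "x$(i, j) + x$(j, i) = 0"
      and y: "y$(i, i) = 0" "y$(i, j) + y$(j, i) = 0" for i j
      unfolding alternating_def by auto
    have "(x + y)$(i, j) + (x + y)$(j, i) = (x$(i, j) + x$(j, i)) + (y$(i, j) + y$(j, i))" for i j
      by (simp add: algebra_simps)
    then show "x + y \<in> {w. alternating w}"
      using x y by (simp add: alternating_def)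
    have "(c *s x)$(i, j) + (c *s x)$(j, i) = c * (x$(i, j) + x$(j, i))" for i j
      by (simp add: algebra_simps)
    then show "c *s x \<in> {w. alternating w}"
      using x by (simp add: alternating_def)
  qed (simp add: alternating_def)
  show "alternating z" if "z \<in> grass_pts" for z
    using that unfolding grass_pts_def alternating_def by (auto simp: algebra_simps)
qed

lemma alternating_split_at_two_indices:
  fixes w :: "'a::field^('n::finite \<times> 'n)"
  assumes "alternating w" "a \<noteq> b"
  shows "w = (w$(a, b) *s wedge (axis a 1) (axis b 1)
      + wedge (axis a 1) (\<chi> j. if j \<in> {a, b} then 0 else w$(a, j))
      + wedge (axis b 1) (\<chi> j. if j \<in> {a, b} then 0 else w$(b, j)))
      + (\<chi> ij. if fst ij \<in> {a, b} \<or> snd ij \<in> {a, b} then 0 else w$ij)"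
proof (subst vec_eq_iff, intro allI)
  have diag: "w$(k, k) = 0" and antisym: "w$(k, l) = - w$(l, k)" for k l
    using assms(1) unfolding alternating_def eq_neg_iff_add_eq_0 by blast+
  fix ij :: "'n \<times> 'n"
  obtain i j where ij: "ij = (i, j)"
    by (cases ij)
  have "(i = a \<or> i = b \<or> i \<notin> {a, b}) \<and> (j = a \<or> j = b \<or> j \<notin> {a, b})"
    by blast
  then show "w $ ij = ((w$(a, b) *s wedge (axis a 1) (axis b 1)
      + wedge (axis a 1) (\<chi> j. if j \<in> {a, b} then 0 else w$(a, j))
      + wedge (axis b 1) (\<chi> j. if j \<in> {a, b} then 0 else w$(b, j)))
      + (\<chi> ij. if fst ij \<in> {a, b} \<or> snd ij \<in> {a, b} then 0 else w$ij)) $ ij"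
    unfolding ij using assms(2)
    by (elim conjE disjE; simp add: diag antisym[of b a] antisym[of i a] antisym[of i b])
qed

lemma alternating_on_four_indices_in_Xi:
  fixes w :: "'a::field^('n::finite \<times> 'n)"
  assumes "alternating w" and distinct: "distinct [a, b, c, d]"
    and supp: "\<And>i j. i \<notin> {a, b, c, d} \<or> j \<notin> {a, b, c, d} \<Longrightarrow> w$(i, j) = 0"
  shows "\<exists>\<xi>\<in>Xi grass_pts. w \<in> \<xi>"
proof -
  define ec ed where "ec = (axis c 1 :: 'a^'n)" and "ed = (axis d 1 :: 'a^'n)"
  have diag: "w$(k, k) = 0" and antisym: "w$(k, l) = - w$(l, k)" for k l
    using assms(1) unfolding alternating_def eq_neg_iff_add_eq_0 by blast+
  have w_eq: "w = w$(a, b) *s wedge (axis a 1) (axis b 1)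
      + wedge (axis a 1) (w$(a, c) *s ec + w$(a, d) *s ed)
      + wedge (axis b 1) (w$(b, c) *s ec + w$(b, d) *s ed) + w$(c, d) *s wedge ec ed"
  proof (subst vec_eq_iff, intro allI)
    fix ij :: "'n \<times> 'n"
    obtain i j where ij: "ij = (i, j)"
      by (cases ij)
    have zero_row: "w$(i, j) = 0" if "i \<notin> {a, b, c, d}" for i j
      using supp that by blast
    have zero_column: "w$(i, j) = 0" if "j \<notin> {a, b, c, d}" for i j
      using supp that by blast
    have "(i = a \<or> i = b \<or> i = c \<or> i = d \<or> i \<notin> {a, b, c, d})
        \<and> (j = a \<or> j = b \<or> j = c \<or> j = d \<or> j \<notin> {a, b, c, d})"
      by blast
    moreover have "a \<noteq> b" "a \<noteq> c" "a \<noteq> d" "b \<noteq> c" "b \<noteq> d" "c \<noteq> d"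
      using distinct by auto
    ultimately show "w $ ij = (w$(a, b) *s wedge (axis a 1) (axis b 1)
      + wedge (axis a 1) (w$(a, c) *s ec + w$(a, d) *s ed)
      + wedge (axis b 1) (w$(b, c) *s ec + w$(b, d) *s ed) + w$(c, d) *s wedge ec ed) $ ij"
      unfolding ij ec_def ed_def
      by (elim conjE disjE; simp add: diag zero_row zero_column antisym[of b a] antisym[of c a]
          antisym[of d a] antisym[of c b] antisym[of d b] antisym[of d c])
  qed
  have "minor ec ed c d \<noteq> 0"
    using distinct by (simp add: ec_def ed_def minor_def)
  then show ?thesis
    using grass_klein_quadric_in_Xi[of a b ec ed c d] distinct
    by (subst w_eq) (simp add: ec_def ed_def)
qed

lemma grass_decomposition:
  fixes w :: "'a::field^('n::finite \<times> 'n)"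
  assumes "CARD('n) \<in> {5, 6}" and alt: "alternating w"
  shows "\<exists>\<xi>1\<in>Xi grass_pts. \<exists>\<xi>2\<in>Xi grass_pts. \<exists>g1\<in>\<xi>1. \<exists>g2\<in>\<xi>2. w = g1 + g2"
proof -
  obtain a b :: 'n where "a \<noteq> b"
    using two_distinct_elements[of "UNIV :: 'n set"] assms(1) by force
  define R where "R = UNIV - {a, b}"
  have card_R: "card R \<in> {3, 4}"
    using assms(1) \<open>a \<noteq> b\<close> by (auto simp: R_def card_Diff_subset)
  then obtain a' b' where "a' \<in> R" "b' \<in> R" "a' \<noteq> b'"
    using two_distinct_elements[of R] by force
  then have "card (R - {a', b'}) = card R - 2"
    using card_Diff_subset[of "{a', b'}" R] by simp
  then have "card (R - {a', b'}) \<le> 2"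
    using card_R by auto
  then obtain c' d' where "c' \<noteq> d'" "R - {a', b'} \<subseteq> {c', d'}"
      "{c', d'} \<subseteq> (R - {a', b'}) \<union> {a, b}"
    using pair_superset_of_card_le_2[of "R - {a', b'}" a b] \<open>a \<noteq> b\<close> by (metis finite)
  then have distinct: "distinct [a', b', c', d']"
    using \<open>a' \<in> R\<close> \<open>b' \<in> R\<close> \<open>a' \<noteq> b'\<close> by (auto simp: R_def)
  define \<alpha> \<beta> where "\<alpha> = (\<chi> j. if j \<in> {a, b} then 0 else w$(a, j))"
    and "\<beta> = (\<chi> j. if j \<in> {a, b} then 0 else w$(b, j))"
  define rest where "rest = (\<chi> ij. if fst ij \<in> {a, b} \<or> snd ij \<in> {a, b} then 0 else w$ij)"
  have "w = (w$(a, b) *s wedge (axis a 1) (axis b 1) + wedge (axis a 1) \<alpha>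
      + wedge (axis b 1) \<beta>) + rest"
    unfolding \<alpha>_def \<beta>_def rest_def using alt \<open>a \<noteq> b\<close> by (rule alternating_split_at_two_indices)
  moreover have "\<exists>\<xi>\<in>Xi grass_pts.
      w$(a, b) *s wedge (axis a 1) (axis b 1) + wedge (axis a 1) \<alpha> + wedge (axis b 1) \<beta> \<in> \<xi>"
    using \<open>a' \<in> R\<close> \<open>b' \<in> R\<close>
    by (intro grass_two_index_part_in_Xi[of a b a' b'] \<open>a \<noteq> b\<close> \<open>a' \<noteq> b'\<close>)
      (auto simp: R_def \<alpha>_def \<beta>_def)
  moreover have "\<exists>\<xi>\<in>Xi grass_pts. rest \<in> \<xi>"
  proof (rule alternating_on_four_indices_in_Xi[OF _ distinct])
    show "alternating rest"
      using alt by (auto simp: alternating_def rest_def)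
    show "rest $ (i, j) = 0" if "i \<notin> {a', b', c', d'} \<or> j \<notin> {a', b', c', d'}" for i j
      using that \<open>R - {a', b'} \<subseteq> {c', d'}\<close> by (auto simp: rest_def R_def)
  qed
  ultimately show ?thesis
    by metis
qed

theorem proposition3p8:
  shows "(2 \<le> CARD('l::finite) \<and> CARD('l) \<le> 4 \<and> 2 \<le> CARD('k::finite) \<longrightarrow>
            (\<forall>W. legal (segre_pts :: ('a::field^('l \<times> 'k)) set) W \<longleftrightarrow> W = {0}))
       \<and> (CARD('n::finite) \<in> {5, 6} \<longrightarrow>
            (\<forall>W. legal (grass_pts :: ('a^('n \<times> 'n)) set) W \<longleftrightarrow> W = {0}))"
proof (intro conjI impI allI)
  fix W :: "('a^('l \<times> 'k)) set"
  assume "2 \<le> CARD('l) \<and> CARD('l) \<le> 4 \<and> 2 \<le> CARD('k)"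
  then show "legal segre_pts W \<longleftrightarrow> W = {0}"
    by (intro legal_iff_trivial_if_sums_from_Xi segre_decomposition) auto
next
  fix W :: "('a^('n \<times> 'n)) set"
  assume "CARD('n) \<in> {5, 6}"
  then show "legal grass_pts W \<longleftrightarrow> W = {0}"
    by (intro legal_iff_trivial_if_sums_from_Xi grass_decomposition
        alternating_if_in_span_grass_pts)
qed

end
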